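(* Consider a one-step MDP ($T=1$) with a single state $\mathcal{S}=\{s_0\}$, action space equal to the goal space $\mathcal{A}=\mathcal{G}$ with $|\mathcal{A}|=|\mathcal{G}|=k$, and reward $r(s,a,g)=\mathbb{I}[a=g]$. Let the policy be $\pi(a\mid s_0,g)=\exp(L_{a,g})/\sum_{b\in\mathcal{A}}\exp(L_{b,g})$ with logits $L_{a,g}$, let $p(g)=1/k$ for all $g$, and suppose $L_{a,g}\equiv L$ for all $a,g$ (some constant $L$). Let $\eta_{a,g}=r(s_0,b,g')\frac{\partial}{\partial L_{a,g}}\log\pi(b\mid s_0,g')$ with $g'\sim p(\cdot)$, $b\sim\pi(\cdot\mid s_0,g')$ be the one-sample on-policy REINFORCE estimator. Let the hindsight variational distribution $q_h$ (with an on-policy buffer) generate a pair $(b,g')$ as follows: sample $g\sim p(\cdot)$ and $b\sim\pi(\cdot\mid s_0,g)$, then choose the goal $g'$ for which the sampled action is rewarding, i.e. $r(s_0,b,g')=1$ (so $g'=b$). Define the normalized hindsight estimator $\eta^h_{a,g}=r(s_0,b,g')\,\frac{\partial}{\partial L_{a,g}}\log\pi(b\mid s_0,g')/k$ with $(b,g')\sim q_h$. For a random variable $x$ define $\mathrm{MSE}[x]:=\mathbb{E}[(x-\mathbb{E}[\eta_{a,g}])^2]$. Then for every $a\in\mathcal{A}$ and $g\in\mathcal{G}$, as $k\to\infty$, $$\frac{\sqrt{\mathrm{MSE}[\eta^h_{a,g}]}}{\big|\mathbb{E}[\eta_{a,g}]\big|}=\sqrt{k}\,(1+o(1)).$$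
   Context: $o(1)$ denotes a quantity tending to $0$ as $k\to\infty$. *)

theory Defs
  imports "HOL-Analysis.Analysis"
begin

text \<open>One-step MDP with a single state s0; actions = goals = {0..<k}.
  Logits are a function L :: nat \<times> nat \<Rightarrow> real, L(a,g) = L_{a,g}.\<close>

definition rew :: "nat \<Rightarrow> nat \<Rightarrow> real" where
  "rew b g = (if b = g then 1 else 0)"

definition pol :: "nat \<Rightarrow> (nat \<times> nat \<Rightarrow> real) \<Rightarrow> nat \<Rightarrow> nat \<Rightarrow> real" where
  "pol k L b g = exp (L (b, g)) / (\<Sum>c<k. exp (L (c, g)))"

definition score :: "nat \<Rightarrow> (nat \<times> nat \<Rightarrow> real) \<Rightarrow> nat \<Rightarrow> nat \<Rightarrow> nat \<Rightarrow> nat \<Rightarrow> real" where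
  "score k L a g b g' = deriv (\<lambda>t. ln (pol k (L((a, g) := t)) b g')) (L (a, g))"

definition prior :: "nat \<Rightarrow> nat \<Rightarrow> real" where
  "prior k g = 1 / real k"

definition eta :: "nat \<Rightarrow> (nat \<times> nat \<Rightarrow> real) \<Rightarrow> nat \<Rightarrow> nat \<Rightarrow> nat \<Rightarrow> nat \<Rightarrow> real" where
  "eta k L a g b g' = rew b g' * score k L a g b g'"

definition E_eta :: "nat \<Rightarrow> (nat \<times> nat \<Rightarrow> real) \<Rightarrow> nat \<Rightarrow> nat \<Rightarrow> real" where
  "E_eta k L a g = (\<Sum>g'<k. \<Sum>b<k. prior k g' * pol k L b g' * eta k L a g b g')"

text \<open>Hindsight distribution q_h over pairs (b, g'): sample g ~ p, b ~ pi(.|s0,g),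
  then relabel the goal to the (unique) g' with r(s0,b,g') = 1, i.e. g' = b.\<close>
definition qh :: "nat \<Rightarrow> (nat \<times> nat \<Rightarrow> real) \<Rightarrow> nat \<Rightarrow> nat \<Rightarrow> real" where
  "qh k L b g' = (\<Sum>g<k. prior k g * pol k L b g) * (if g' = b then 1 else 0)"

definition eta_h :: "nat \<Rightarrow> (nat \<times> nat \<Rightarrow> real) \<Rightarrow> nat \<Rightarrow> nat \<Rightarrow> nat \<Rightarrow> nat \<Rightarrow> real" where
  "eta_h k L a g b g' = rew b g' * score k L a g b g' / real k"

definition MSE_h :: "nat \<Rightarrow> (nat \<times> nat \<Rightarrow> real) \<Rightarrow> nat \<Rightarrow> nat \<Rightarrow> real" where
  "MSE_h k L a g = (\<Sum>b<k. \<Sum>g'<k. qh k L b g' * (eta_h k L a g b g' - E_eta k L a g)\<^sup>2)"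

end

theory Submission
  imports Defs "HOL-Real_Asymp.Real_Asymp"
begin

text \<open>The score of a softmax policy is
  \<open>\<partial> log \<pi>(b | g') / \<partial> L\<^sub>a\<^sub>,\<^sub>g = [g' = g] ([b = a] - \<pi>(a | g))\<close>, which at constant logits
  is \<open>[g' = g] ([b = a] - 1/k)\<close>. Writing \<open>s = [g = a] - 1/k\<close>, the REINFORCE mean is \<open>s/k\<^sup>2\<close>,
  while the hindsight estimator equals \<open>s/k\<close> with probability \<open>1/k\<close> (when the relabelled
  goal is \<open>g\<close>) and \<open>0\<close> otherwise. Hence its mean squared error is
  \<open>(1/k)(s/k - s/k\<^sup>2)\<^sup>2 + (1 - 1/k)(s/k\<^sup>2)\<^sup>2 = s\<^sup>2(k - 1)/k\<^sup>4\<close>, and the ratio in question is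
  exactly \<open>\<surd>(k - 1) = \<surd>k \<surd>(1 - 1/k)\<close>.\<close>

lemma sum_lessThan_if_eq:
  fixes A B :: "'a::comm_ring_1"
  assumes "a < k"
  shows "(\<Sum>x<k. if x = a then A else B) = A + (of_nat k - 1) * B"
proof -
  have "(\<Sum>x<k. if x = a then A else B) = (\<Sum>x<k. B + (if x = a then A - B else 0))"
    by (rule sum.cong) auto
  also have "\<dots> = of_nat k * B + (A - B)"
    using assms by (simp add: sum.distrib)
  finally show ?thesis
    by (simp add: algebra_simps)
qed

lemma pol_const: "0 < k \<Longrightarrow> pol k (\<lambda>_. c) b g = 1 / real k"
  by (simp add: pol_def)

lemma score_softmax:
  assumes "a < k"
  shows "score k L a g b g' = (if g' = g then of_bool (b = a) - pol k L a g else 0)"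
proof (cases "g' = g")
  case False
  then have "(\<lambda>t. ln (pol k (L((a, g) := t)) b g')) = (\<lambda>_. ln (pol k L b g'))"
    by (simp add: pol_def)
  then show ?thesis
    using False by (simp add: score_def)
next
  case True
  define R where "R = (\<Sum>x\<in>{..<k} - {a}. exp (L (x, g)))"
  define S where "S t = exp t + R" for t
  have S_pos: "0 < S t" for t
    unfolding S_def R_def by (intro add_pos_nonneg sum_nonneg) auto
  then have S_nonzero: "S t \<noteq> 0" for t
    by (metis less_irrefl)
  have sum_eq_S: "(\<Sum>x<k. exp (if x = a then t else L (x, g))) = S t" for t
    using assms by (simp add: S_def R_def sum.remove[of "{..<k}" a])
  have log_pol:
    "(\<lambda>t. ln (pol k (L((a, g) := t)) b g')) = (\<lambda>t. (if b = a then t else L (b, g)) - ln (S t))"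
    using True S_nonzero by (simp add: pol_def sum_eq_S ln_div)
  have S_deriv: "(S has_real_derivative exp t) (at t)" for t
    unfolding S_def by (auto intro!: derivative_eq_intros)
  have "((\<lambda>t. (if b = a then t else L (b, g)) - ln (S t)) has_real_derivative
      of_bool (b = a) - exp (L (a, g)) / S (L (a, g))) (at (L (a, g)))"
    by (cases "b = a")
      (auto intro!: derivative_eq_intros S_deriv simp: S_pos S_nonzero divide_simps)
  moreover have "S (L (a, g)) = (\<Sum>x<k. exp (L (x, g)))"
    unfolding sum_eq_S[symmetric] by (intro sum.cong) auto
  then have "exp (L (a, g)) / S (L (a, g)) = pol k L a g"
    by (simp add: pol_def)
  ultimately show ?thesis
    unfolding score_def log_pol using True by (simp add: DERIV_imp_deriv)
qed

lemma E_eta_eq: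
  assumes "a < k" "g < k"
  shows "E_eta k L a g = pol k L g g * (of_bool (g = a) - pol k L a g) / real k"
proof -
  have summand: "prior k g' * pol k L b g' * eta k L a g b g' =
      (if b = g then if g' = g then prior k g * pol k L g g * (of_bool (g = a) - pol k L a g) else 0 else 0)"
    for b g'
    by (simp add: eta_def rew_def score_softmax[OF assms(1)])
  show ?thesis
    unfolding E_eta_def summand using assms by (simp add: prior_def)
qed

lemma MSE_h_eq:
  "MSE_h k L a g =
     (\<Sum>b<k. (\<Sum>g<k. prior k g * pol k L b g) * (eta_h k L a g b b - E_eta k L a g)\<^sup>2)"
proof -
  have summand: "qh k L b g' * y = (if g' = b then (\<Sum>g<k. prior k g * pol k L b g) * y else 0)"
    for b g' y
    by (simp add: qh_def)
  show ?thesis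
    unfolding MSE_h_def summand by simp
qed

lemma E_eta_const:
  assumes "a < k" "g < k"
  shows "E_eta k (\<lambda>_. c) a g = (of_bool (g = a) - 1 / real k) / (real k)\<^sup>2"
  using assms by (simp add: E_eta_eq pol_const power2_eq_square)

lemma MSE_h_const:
  assumes "a < k" "g < k"
  defines "s \<equiv> of_bool (g = a) - 1 / real k"
  shows "MSE_h k (\<lambda>_. c) a g = s\<^sup>2 * (real k - 1) / (real k)^4"
proof -
  have k: "real k \<ge> 1"
    using assms by simp
  let ?E = "s / (real k)\<^sup>2"
  have marginal: "(\<Sum>g<k. prior k g * pol k (\<lambda>_. c) b g) = 1 / real k" for b
    using k by (simp add: prior_def pol_const)
  have "MSE_h k (\<lambda>_. c) a g = (\<Sum>b<k. 1 / real k * (if b = g then (s / real k - ?E)\<^sup>2 else ?E\<^sup>2))"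
    unfolding MSE_h_eq marginal
    by (intro sum.cong refl)
      (simp add: E_eta_const[OF assms(1,2)] eta_h_def rew_def score_softmax[OF assms(1)]
        pol_const s_def)
  also have "\<dots> = 1 / real k * ((s / real k - ?E)\<^sup>2 + (real k - 1) * ?E\<^sup>2)"
    by (simp only: sum_distrib_left[symmetric] sum_lessThan_if_eq[OF assms(2)])
  also have "\<dots> = s\<^sup>2 * (real k - 1) / (real k)^4"
    using k by (simp add: field_simps power2_eq_square) (simp add: algebra_simps power4_eq_xxxx)
  finally show ?thesis .
qed

lemma hindsight_ratio_const:
  assumes "a < k" "g < k" "k \<ge> 2"
  shows "sqrt (MSE_h k (\<lambda>_. c) a g) / \<bar>E_eta k (\<lambda>_. c) a g\<bar> / sqrt (real k)
    = sqrt (1 - 1 / real k)"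
proof -
  define s where "s = of_bool (g = a) - 1 / real k"
  have k: "real k \<ge> 2"
    using assms by simp
  have "s \<noteq> 0"
    using k by (auto simp: s_def field_simps)
  have "sqrt ((real k)^4) = (real k)\<^sup>2"
    using real_sqrt_abs[of "(real k)\<^sup>2"] by (simp flip: power_mult)
  then have "sqrt (MSE_h k (\<lambda>_. c) a g) = \<bar>s\<bar> * sqrt (real k - 1) / (real k)\<^sup>2"
    by (simp add: MSE_h_const[OF assms(1,2)] s_def real_sqrt_mult real_sqrt_divide)
  then have "sqrt (MSE_h k (\<lambda>_. c) a g) / \<bar>E_eta k (\<lambda>_. c) a g\<bar> / sqrt (real k)
      = sqrt (real k - 1) / sqrt (real k)"
    using \<open>s \<noteq> 0\<close> k by (simp add: E_eta_const[OF assms(1,2)] flip: s_def)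
  also have "\<dots> = sqrt (1 - 1 / real k)"
    using k by (simp add: field_simps flip: real_sqrt_divide)
  finally show ?thesis .
qed

theorem theorem2:
  fixes c :: real
  shows "\<forall>\<epsilon>>0. \<forall>\<^sub>F k in sequentially. \<forall>a<k. \<forall>g<k.
           \<bar>(sqrt (MSE_h k (\<lambda>_. c) a g) / \<bar>E_eta k (\<lambda>_. c) a g\<bar>) / sqrt (real k) - 1\<bar> < \<epsilon>"
proof (intro allI impI)
  fix \<epsilon> :: real
  assume "\<epsilon> > 0"
  have "(\<lambda>k. sqrt (1 - 1 / real k)) \<longlonglongrightarrow> 1"
    by real_asymp
  then have "\<forall>\<^sub>F k in sequentially. \<bar>sqrt (1 - 1 / real k) - 1\<bar> < \<epsilon>"
    using \<open>\<epsilon> > 0\<close> by (simp add: tendsto_iff dist_real_def)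
  with eventually_ge_at_top[of 2]
  show "\<forall>\<^sub>F k in sequentially. \<forall>a<k. \<forall>g<k.
      \<bar>(sqrt (MSE_h k (\<lambda>_. c) a g) / \<bar>E_eta k (\<lambda>_. c) a g\<bar>) / sqrt (real k) - 1\<bar> < \<epsilon>"
    by eventually_elim (auto simp: hindsight_ratio_const simp del: divide_divide_eq_left)
qed

end
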